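(* Let $K$ be a finite field of characteristic $p$ and let $d$ be an integer with $\gcd(d,|K|-1)=1$ that is nondegenerate over $K$. Then $|W_{K,d}(a)|<|K|$ for all $a\in K^\times$.
   Context: $\psi_K(x)=\exp(2\pi i\,\mathrm{Tr}_{K/\mathbb{F}_p}(x)/p)$ is the canonical additive character of $K$, and for $a\in K$ the Weil sum is $W_{K,d}(a)=\sum_{x\in K}\psi_K(x^d+ax)$ (a real algebraic integer). $d$ is degenerate over $K$ if $d\equiv p^j\pmod{|K|-1}$ for some integer $j$, and nondegenerate otherwise. *)

theory Defs
  imports "HOL-Analysis.Analysis"
begin

definition field_degree :: "'a::{field,finite} itself \<Rightarrow> nat" where
  "field_degree TYPE('a) = (THE n. CARD('a) = CHAR('a) ^ n)"

definition abs_trace :: "'a::{field,finite} \<Rightarrow> 'a" where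
  "abs_trace x = (\<Sum>j<field_degree TYPE('a). x ^ (CHAR('a) ^ j))"

definition abs_trace_nat :: "'a::{field,finite} \<Rightarrow> nat" where
  "abs_trace_nat x = (THE m. m < CHAR('a) \<and> of_nat m = abs_trace x)"

definition canon_add_char :: "'a::{field,finite} \<Rightarrow> complex" where
  "canon_add_char x =
     exp (2 * pi * \<i> * of_nat (abs_trace_nat x) / of_nat CHAR('a))"

text \<open>Weil sum W_{K,d}(a) = sum over x of psi_K(x^d + a x); x^d with integer d,
  using the power_int operation (so 0^d = 0).\<close>
definition weil_sum :: "int \<Rightarrow> 'a::{field,finite} \<Rightarrow> complex" where
  "weil_sum d a = (\<Sum>x\<in>(UNIV::'a set). canon_add_char (x powi d + a * x))"

definition degenerate :: "'a::{field,finite} itself \<Rightarrow> int \<Rightarrow> bool" where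
  "degenerate TYPE('a) d \<longleftrightarrow>
     (\<exists>j::nat. d mod (int CARD('a) - 1) = (int CHAR('a) ^ j) mod (int CARD('a) - 1))"

end

theory Submission
  imports Defs "HOL-Computational_Algebra.Polynomial" "HOL-Computational_Algebra.Primes"
    "HOL-Number_Theory.Cong"
begin

text \<open>Every summand of the Weil sum is a unit complex number and the summand at x = 0 is 1,
  so |W| = |K| would force Tr(x^d + a x) = 0 for all x. Since gcd(d, |K| - 1) = 1, we have
  x^d = x^r for the residue 0 < r < |K| - 1 of d; reducing the exponents of the conjugates
  x^(r p^j) into [1, |K| - 1] turns the trace into a polynomial of degree below |K|.
  Nondegeneracy means that no r p^j is 1 modulo |K| - 1, so the coefficient of x is exactly
  a \<noteq> 0, and a nonzero polynomial of degree below |K| cannot vanish on all of K.\<close>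

lemma prime_CHAR_finite_field: "prime CHAR('a::{field,finite})"
  using prime_CHAR_semidom finite_imp_CHAR_pos[OF finite_class.finite_UNIV] by blast

lemma card_finite_field_ge_2: "2 \<le> CARD('a::{field,finite})"
proof -
  have "card {0::'a, 1} \<le> CARD('a)"
    by (rule card_mono) auto
  then show ?thesis
    by simp
qed

lemma power_card_minus_1_eq_1:
  fixes x :: "'a::{field,finite}"
  assumes "x \<noteq> 0"
  shows "x ^ (CARD('a) - 1) = 1"
proof -
  let ?U = "UNIV - {0::'a}"
  have "x ^ card ?U * (\<Prod>y\<in>?U. y) = (\<Prod>y\<in>?U. x * y)"
    by (simp add: prod.distrib)
  also have "\<dots> = (\<Prod>y\<in>?U. y)"
    by (rule prod.reindex_bij_witness[of _ "\<lambda>y. y / x" "\<lambda>y. x * y"]) (use assms in auto)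
  finally have "x ^ card ?U = 1"
    by simp
  then show ?thesis
    by (simp add: card_Diff_singleton)
qed

lemma power_card_eq_self: "(x::'a::{field,finite}) ^ CARD('a) = x"
proof (cases "x = 0")
  case False
  have "CARD('a) = Suc (CARD('a) - 1)"
    using card_finite_field_ge_2[where 'a='a] by simp
  then have "x ^ CARD('a) = x * x ^ (CARD('a) - 1)"
    by (metis power_Suc)
  then show ?thesis
    using power_card_minus_1_eq_1[OF False] by simp
qed simp

lemma of_nat_power_CHAR:
  assumes "prime CHAR('a::comm_semiring_1)"
  shows "(of_nat m :: 'a) ^ CHAR('a) = of_nat m"
proof (induction m)
  case 0
  then show ?case
    using assms by (simp add: prime_gt_0_nat power_0_left)
next
  case (Suc m)
  then show ?case
    using freshmans_dream[OF assms refl, of "of_nat m" 1] by (simp add: add.commute)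
qed

lemma of_nat_inj_below_CHAR:
  assumes "m < CHAR('a::semiring_1_cancel)" "n < CHAR('a)" "(of_nat m :: 'a) = of_nat n"
  shows "m = n"
proof (rule ccontr)
  have *: False if "k < l" "l < CHAR('a)" "(of_nat k :: 'a) = of_nat l" for k l
  proof -
    have "CHAR('a) dvd l - k"
      using of_nat_eq_iff_char_dvd[OF \<open>k < l\<close>] that(3) by blast
    then show False
      using that by (auto dest: dvd_imp_le)
  qed
  assume "m \<noteq> n"
  then show False
    using *[of m n] *[of n m] assms by (metis linorder_neqE_nat)
qed

lemma of_nat_power_CHAR_minus_2_inverse:
  assumes "prime CHAR('a::field)" "(of_nat c :: 'a) \<noteq> 0"
  shows "of_nat (c ^ (CHAR('a) - 2)) * (of_nat c :: 'a) = 1"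
proof -
  have "CHAR('a) = Suc (Suc (CHAR('a) - 2))"
    using prime_ge_2_nat[OF assms(1)] by simp
  then have "of_nat c * (of_nat (c ^ (CHAR('a) - 2)) * of_nat c) = (of_nat c :: 'a) * 1"
    using of_nat_power_CHAR[OF assms(1), of c]
    by (metis mult.commute mult.right_neutral of_nat_power power_Suc power_Suc2)
  then show ?thesis
    using assms(2) by simp
qed

definition add_submonoid :: "'a::monoid_add set \<Rightarrow> bool" where
  "add_submonoid H \<longleftrightarrow> 0 \<in> H \<and> (\<forall>x\<in>H. \<forall>y\<in>H. x + y \<in> H)"

lemma add_submonoid_of_nat_mult:
  fixes H :: "'a::semiring_1 set"
  assumes "add_submonoid H" "h \<in> H"
  shows "of_nat m * h \<in> H"
  using assms by (induction m) (auto simp: add_submonoid_def distrib_right)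

lemma add_submonoid_diff:
  fixes H :: "'a::ring_1 set"
  assumes "0 < CHAR('a)" "add_submonoid H" "h \<in> H" "k \<in> H"
  shows "h - k \<in> H"
proof -
  have "h - k = h + of_nat (CHAR('a) - 1) * k"
    using assms(1) by (simp add: of_nat_diff algebra_simps)
  then show ?thesis
    using assms(2-4) add_submonoid_of_nat_mult unfolding add_submonoid_def by metis
qed

lemma add_submonoid_cancel_of_nat:
  fixes H :: "'a::field set"
  assumes "prime CHAR('a)" "add_submonoid H" "of_nat c * v \<in> H" "(of_nat c :: 'a) \<noteq> 0"
  shows "v \<in> H"
proof -
  have "v = of_nat (c ^ (CHAR('a) - 2)) * (of_nat c * v)"
    using of_nat_power_CHAR_minus_2_inverse[OF assms(1,4)] by (metis mult.assoc mult_1)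
  then show ?thesis
    using add_submonoid_of_nat_mult[OF assms(2,3)] by metis
qed

lemma of_nat_mod_CHAR: "(of_nat (m mod CHAR('a)) :: 'a::semiring_1) = of_nat m"
proof -
  have "(of_nat m :: 'a) = of_nat (m mod CHAR('a) + CHAR('a) * (m div CHAR('a)))"
    by simp
  then show ?thesis
    by (simp only: of_nat_add of_nat_mult of_nat_CHAR) simp
qed

text \<open>Adjoining \<open>v \<notin> H\<close> to an additive submonoid \<open>H\<close> of a finite field multiplies its size
  by \<open>p\<close>, since the translates \<open>H + m v\<close>, \<open>m < p\<close>, are pairwise disjoint.\<close>

lemma add_submonoid_extend:
  fixes H :: "'a::{field,finite} set"
  assumes H: "add_submonoid H" and v: "v \<notin> H"
  defines "H' \<equiv> (\<lambda>(h, m). h + of_nat m * v) ` (H \<times> {..<CHAR('a)})"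
  shows "add_submonoid H'" "card H' = CHAR('a) * card H" "insert v H \<subseteq> H'"
proof -
  let ?p = "CHAR('a)"
  have p: "prime ?p"
    by (rule prime_CHAR_finite_field)
  then have p1: "1 < ?p"
    by (rule prime_gt_1_nat)
  have "h1 = h2 \<and> m1 = m2"
    if "h1 \<in> H" "h2 \<in> H" "m1 < ?p" "m2 < ?p" "h1 + of_nat m1 * v = h2 + of_nat m2 * v"
    for h1 h2 m1 m2
  proof -
    have "\<not> m1 < m2" if "h1 \<in> H" "h2 \<in> H" "m2 < ?p" "h1 + of_nat m1 * v = h2 + of_nat m2 * v"
      for h1 h2 m1 m2
    proof
      assume "m1 < m2"
      then have "of_nat (m2 - m1) * v = h1 - h2"
        using that(4) by (simp add: of_nat_diff algebra_simps)
      moreover have "\<not> ?p dvd m2 - m1"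
        using \<open>m1 < m2\<close> that(3) by (auto dest: dvd_imp_le)
      then have "(of_nat (m2 - m1) :: 'a) \<noteq> 0"
        by (metis of_nat_eq_0_iff_char_dvd)
      moreover have "h1 - h2 \<in> H"
        using add_submonoid_diff[OF _ H that(1,2)] p1 by simp
      ultimately show False
        using add_submonoid_cancel_of_nat[OF p H] v by metis
    qed
    then have "m1 = m2"
      using that by (metis linorder_neqE_nat)
    then show ?thesis
      using that(5) by simp
  qed
  then have inj: "inj_on (\<lambda>(h, m). h + of_nat m * v) (H \<times> {..<?p})"
    by (intro inj_onI) auto
  then show "card H' = ?p * card H"
    unfolding H'_def by (simp add: card_image card_cartesian_product)
  show "add_submonoid H'"
    unfolding add_submonoid_def
  proof (intro conjI ballI)
    show "0 \<in> H'"
      using H p1 unfolding H'_def add_submonoid_def by (auto intro!: image_eqI[of _ _ "(0, 0)"])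
    fix x y
    assume "x \<in> H'" "y \<in> H'"
    then obtain h1 m1 h2 m2 where hm: "h1 \<in> H" "h2 \<in> H"
        "x = h1 + of_nat m1 * v" "y = h2 + of_nat m2 * v"
      unfolding H'_def by auto
    have "x + y = (h1 + h2) + of_nat ((m1 + m2) mod ?p) * v"
      unfolding hm of_nat_mod_CHAR by (simp add: algebra_simps)
    moreover have "h1 + h2 \<in> H"
      using H hm unfolding add_submonoid_def by blast
    ultimately show "x + y \<in> H'"
      unfolding H'_def using p1 by (intro image_eqI[of _ _ "(h1 + h2, (m1 + m2) mod ?p)"]) auto
  qed
  have "v \<in> H'"
    using H p1 unfolding H'_def add_submonoid_def by (auto intro!: image_eqI[of _ _ "(0, 1)"])
  moreover have "h \<in> H'" if "h \<in> H" for h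
    using that p1 unfolding H'_def by (auto intro!: image_eqI[of _ _ "(h, 0)"])
  ultimately show "insert v H \<subseteq> H'"
    by blast
qed

lemma card_add_submonoid_index_CHAR_power:
  fixes H :: "'a::{field,finite} set"
  assumes "add_submonoid H"
  shows "\<exists>k. CARD('a) = card H * CHAR('a) ^ k"
  using assms
proof (induction "card (UNIV - H)" arbitrary: H rule: less_induct)
  case less
  show ?case
  proof (cases "H = UNIV")
    case True
    then show ?thesis
      by (intro exI[of _ 0]) simp
  next
    case False
    then obtain v where v: "v \<notin> H"
      by auto
    define H' where "H' = (\<lambda>(h, m). h + of_nat m * v) ` (H \<times> {..<CHAR('a)})"
    note H' = add_submonoid_extend[OF less.prems v, folded H'_def]
    have "card (UNIV - H') < card (UNIV - H)"
      using H'(3) v by (intro psubset_card_mono) auto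
    then obtain k where "CARD('a) = card H' * CHAR('a) ^ k"
      using less.hyps H'(1) by blast
    then show ?thesis
      using H'(2) by (intro exI[of _ "Suc k"]) simp
  qed
qed

lemma card_eq_CHAR_power_field_degree:
  "CARD('a::{field,finite}) = CHAR('a) ^ field_degree TYPE('a)"
proof -
  obtain k where k: "CARD('a) = CHAR('a) ^ k"
    using card_add_submonoid_index_CHAR_power[of "{0::'a}"] by (auto simp: add_submonoid_def)
  moreover have "1 < CHAR('a)"
    using prime_CHAR_finite_field prime_gt_1_nat by blast
  ultimately have "field_degree TYPE('a) = k"
    unfolding field_degree_def by (intro the_equality) (auto simp: power_inject_exp)
  then show ?thesis
    using k by simp
qed

lemma field_degree_pos: "0 < field_degree TYPE('a::{field,finite})"
proof (rule ccontr)
  assume "\<not> 0 < field_degree TYPE('a)"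
  then have "CARD('a) = 1"
    using card_eq_CHAR_power_field_degree[where 'a='a] by simp
  then show False
    using card_finite_field_ge_2[where 'a='a] by simp
qed

lemma power_CHAR_power_field_degree:
  "(x::'a::{field,finite}) ^ (CHAR('a) ^ field_degree TYPE('a)) = x"
  using power_card_eq_self card_eq_CHAR_power_field_degree by metis

lemma abs_trace_zero [simp]: "abs_trace (0::'a::{field,finite}) = 0"
  unfolding abs_trace_def using prime_CHAR_finite_field[where 'a='a]
  by (simp add: prime_gt_0_nat power_0_left)

lemma abs_trace_power_CHAR: "abs_trace (y::'a::{field,finite}) ^ CHAR('a) = abs_trace y"
proof -
  let ?p = "CHAR('a)" and ?n = "field_degree TYPE('a)"
  define f where "f j = y ^ (?p ^ j)" for j
  have "abs_trace y ^ ?p = (\<Sum>j<?n. f j ^ ?p)"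
    unfolding abs_trace_def f_def by (rule freshmans_dream_sum[OF prime_CHAR_finite_field refl])
  also have "\<dots> = (\<Sum>j<?n. f (Suc j))"
    unfolding f_def by (simp add: power_mult[symmetric] mult.commute)
  also have "\<dots> = (\<Sum>j<?n. f j)"
  proof -
    have "f ?n = f 0"
      unfolding f_def by (simp add: power_CHAR_power_field_degree)
    then show ?thesis
      using sum.lessThan_Suc_shift[of f ?n] by (simp add: add.commute)
  qed
  finally show ?thesis
    unfolding abs_trace_def f_def .
qed

lemma power_CHAR_eq_self_imp_of_nat:
  fixes t :: "'a::field"
  assumes "prime CHAR('a)" "t ^ CHAR('a) = t"
  shows "\<exists>m<CHAR('a). of_nat m = t"
proof (rule ccontr)
  let ?p = "CHAR('a)"
  assume t: "\<not> (\<exists>m<?p. of_nat m = t)"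
  define P where "P = monom (1::'a) ?p - [:0, 1:]"
  have p2: "2 \<le> ?p"
    using assms(1) by (rule prime_ge_2_nat)
  have "coeff P ?p = 1"
    using p2 unfolding P_def by (simp add: coeff_pCons split: nat.split)
  then have P: "P \<noteq> 0"
    by auto
  have "degree P \<le> ?p"
    unfolding P_def by (rule degree_le) (use p2 in \<open>auto simp: coeff_pCons split: nat.split\<close>)
  have roots: "poly P x = 0 \<longleftrightarrow> x ^ ?p = x" for x
    unfolding P_def by (simp add: poly_monom)
  have "insert t (of_nat ` {..<?p}) \<subseteq> {x. poly P x = 0}"
    using assms by (auto simp: roots of_nat_power_CHAR)
  then have "card (insert t (of_nat ` {..<?p})) \<le> ?p"
    using card_mono[OF poly_roots_finite[OF P]] card_poly_roots_bound[OF P] \<open>degree P \<le> ?p\<close>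
    by (meson order_trans)
  moreover have "card (of_nat ` {..<?p} :: 'a set) = ?p"
    by (subst card_image) (auto intro!: inj_onI of_nat_inj_below_CHAR)
  moreover have "t \<notin> of_nat ` {..<?p}"
    using t by auto
  ultimately show False
    by simp
qed

lemma of_nat_abs_trace_nat: "of_nat (abs_trace_nat y) = abs_trace (y::'a::{field,finite})"
proof -
  obtain m where m: "m < CHAR('a)" "of_nat m = abs_trace y"
    using power_CHAR_eq_self_imp_of_nat[OF prime_CHAR_finite_field abs_trace_power_CHAR] by blast
  then have "abs_trace_nat y = m"
    unfolding abs_trace_nat_def by (intro the_equality) (auto intro: of_nat_inj_below_CHAR)
  then show ?thesis
    using m(2) by simp
qed

lemma canon_add_char_eq_exp:
  "canon_add_char (y::'a::{field,finite}) =
     exp (\<i> * complex_of_real (2 * pi * real (abs_trace_nat y) / real CHAR('a)))"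
  unfolding canon_add_char_def by (simp add: mult_ac)

lemma norm_canon_add_char [simp]: "norm (canon_add_char y) = 1"
  unfolding canon_add_char_eq_exp by (rule norm_exp_i_times)

lemma canon_add_char_eq_1_iff: "canon_add_char y = 1 \<longleftrightarrow> abs_trace (y::'a::{field,finite}) = 0"
proof -
  let ?m = "abs_trace_nat y" and ?p = "CHAR('a)"
  note m = of_nat_abs_trace_nat[of y]
  have p: "0 < real ?p"
    using prime_CHAR_finite_field[where 'a='a] prime_gt_0_nat by simp
  have "canon_add_char y = 1 \<longleftrightarrow> (\<exists>n::int. real ?m = of_int n * real ?p)"
    using p pi_gt_zero unfolding canon_add_char_eq_exp exp_eq_1 by (auto simp: field_simps)
  also have "\<dots> \<longleftrightarrow> int ?p dvd int ?m"
  proof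
    assume "\<exists>n::int. real ?m = of_int n * real ?p"
    then obtain n :: int where "of_int (int ?m) = (of_int (n * int ?p) :: real)"
      by auto
    then have "int ?m = n * int ?p"
      by (simp only: of_int_eq_iff)
    then show "int ?p dvd int ?m"
      by simp
  next
    assume "int ?p dvd int ?m"
    then obtain n where "int ?m = int ?p * n"
      by (elim dvdE)
    then have "real ?m = of_int n * real ?p"
      by (metis mult.commute of_int_mult of_int_of_nat_eq)
    then show "\<exists>n::int. real ?m = of_int n * real ?p"
      by blast
  qed
  also have "\<dots> \<longleftrightarrow> abs_trace y = 0"
    by (simp flip: m add: of_nat_eq_0_iff_char_dvd)
  finally show ?thesis .
qed

lemma norm_sum_less_card:
  fixes f :: "'b \<Rightarrow> 'c::real_inner"
  assumes S: "finite S" "\<And>z. z \<in> S \<Longrightarrow> norm (f z) = 1"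
    and xy: "x \<in> S" "y \<in> S" "f x \<noteq> f y"
  shows "norm (sum f S) < card S"
proof -
  let ?R = "S - {x} - {y}"
  have "x \<noteq> y"
    using xy by blast
  then have "2 \<le> card S"
    using card_mono[OF S(1), of "{x, y}"] xy by simp
  have "norm (f x + f y) \<noteq> norm (f x) + norm (f y)"
    using norm_triangle_eq[of "f x" "f y"] xy S(2) by auto
  then have pair: "norm (f x + f y) < 2"
    using norm_triangle_ineq[of "f x" "f y"] xy S(2) by simp
  have "norm (sum f ?R) \<le> (\<Sum>z\<in>?R. norm (f z))"
    by (rule norm_sum)
  also have "\<dots> = card ?R"
    using S(2) by simp
  finally have rest: "norm (sum f ?R) \<le> real (card S) - 2"
    using xy \<open>x \<noteq> y\<close> \<open>2 \<le> card S\<close> by (simp add: card_Diff_singleton_if of_nat_diff)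
  have "sum f S = f x + f y + sum f ?R"
    using xy \<open>x \<noteq> y\<close> S(1) by (simp add: sum.remove add.assoc)
  then have "norm (sum f S) \<le> norm (f x + f y) + norm (sum f ?R)"
    by (simp add: norm_triangle_ineq)
  then show ?thesis
    using pair rest by linarith
qed

lemma power_int_eq_power_mod:
  fixes x :: "'a::{field,finite}"
  assumes "0 < d mod (int CARD('a) - 1)"
  shows "x powi d = x ^ nat (d mod (int CARD('a) - 1))"
proof (cases "x = 0")
  case True
  then show ?thesis
    using assms by (auto simp: power_int_0_left_if)
next
  case False
  let ?N = "int CARD('a) - 1"
  have "x powi ?N = 1"
    using power_card_minus_1_eq_1[OF False] card_finite_field_ge_2[where 'a='a]
    by (simp add: power_int_def of_nat_diff nat_diff_distrib)
  then have "x powi (?N * (d div ?N)) = 1"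
    by (simp add: power_int_mult)
  then have "x powi d = x powi (d mod ?N)"
    using False by (metis mult.left_neutral mult_div_mod_eq power_int_add)
  then show ?thesis
    using assms by (simp add: power_int_def)
qed

lemma power_eq_power_reduced:
  fixes x :: "'a::{field,finite}"
  assumes "0 < m"
  shows "x ^ m = x ^ ((m - 1) mod (CARD('a) - 1) + 1)"
proof (cases "x = 0")
  case True
  then show ?thesis
    using zero_power[OF assms] by (simp only: power_add power_one_right mult_zero_right)
next
  case False
  let ?N = "CARD('a) - 1"
  have "x ^ (m - 1) = x ^ (?N * ((m - 1) div ?N) + (m - 1) mod ?N)"
    by simp
  also have "\<dots> = x ^ ((m - 1) mod ?N)"
    by (simp only: power_add power_mult power_card_minus_1_eq_1[OF False]) simp
  finally show ?thesis
    using assms by (metis Suc_diff_1 Suc_eq_plus1 power_Suc2)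
qed

lemma poly_eq_0_if_vanishes_on_finite_field:
  fixes Q :: "'a::{field,finite} poly"
  assumes "degree Q < CARD('a)" "\<And>x. poly Q x = 0"
  shows "Q = 0"
proof (rule ccontr)
  assume "Q \<noteq> 0"
  then have "card {x. poly Q x = 0} \<le> degree Q"
    by (rule card_poly_roots_bound)
  then show False
    using assms by simp
qed

lemma CHAR_power_conjugate_not_cong_1:
  fixes r :: nat
  assumes nondeg: "\<And>i. \<not> [r = CHAR('a::{field,finite}) ^ i] (mod CARD('a) - 1)"
    and j: "j \<le> field_degree TYPE('a)"
  shows "\<not> [r * CHAR('a) ^ j = 1] (mod CARD('a) - 1)"
proof
  let ?p = "CHAR('a)" and ?n = "field_degree TYPE('a)" and ?N = "CARD('a) - 1"
  assume rpj: "[r * ?p ^ j = 1] (mod ?N)"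
  have "[CARD('a) = 1] (mod ?N)"
    using card_finite_field_ge_2[where 'a='a] by (simp add: cong_altdef_nat)
  then have "[r * 1 = r * CARD('a)] (mod ?N)"
    using cong_mult[OF cong_refl[of r]] by (blast intro: cong_sym)
  also have "r * CARD('a) = r * ?p ^ j * ?p ^ (?n - j)"
    using j card_eq_CHAR_power_field_degree[where 'a='a] by (simp flip: mult.assoc power_add)
  also have "[\<dots> = 1 * ?p ^ (?n - j)] (mod ?N)"
    by (rule cong_mult[OF rpj cong_refl])
  finally show False
    using nondeg[of "?n - j"] by simp
qed

lemma abs_trace_power_plus_linear:
  fixes x a :: "'a::{field,finite}"
  assumes "0 < r"
  shows "abs_trace (x ^ r + a * x) =
    (\<Sum>j<field_degree TYPE('a).
       x ^ ((r * CHAR('a) ^ j - 1) mod (CARD('a) - 1) + 1) + a ^ CHAR('a) ^ j * x ^ CHAR('a) ^ j)"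
  unfolding abs_trace_def
proof (rule sum.cong[OF refl])
  fix j
  let ?q = "CHAR('a) ^ j"
  have "0 < r * ?q"
    using assms prime_CHAR_finite_field[where 'a='a] by (simp add: prime_gt_0_nat)
  then have "(x ^ r) ^ ?q = x ^ ((r * ?q - 1) mod (CARD('a) - 1) + 1)"
    unfolding power_mult[symmetric] by (rule power_eq_power_reduced)
  then show "(x ^ r + a * x) ^ ?q = x ^ ((r * ?q - 1) mod (CARD('a) - 1) + 1) + a ^ ?q * x ^ ?q"
    by (simp add: freshmans_dream'[OF prime_CHAR_finite_field refl] power_mult_distrib)
qed

lemma abs_trace_power_plus_linear_nonzero:
  fixes a :: "'a::{field,finite}"
  assumes a: "a \<noteq> 0" and r: "0 < r"
    and nondeg: "\<And>j. \<not> [r = CHAR('a) ^ j] (mod CARD('a) - 1)"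
  shows "\<exists>x. abs_trace (x ^ r + a * x) \<noteq> 0"
proof (rule ccontr)
  let ?p = "CHAR('a)" and ?n = "field_degree TYPE('a)" and ?N = "CARD('a) - 1"
  assume "\<not> (\<exists>x. abs_trace (x ^ r + a * x) \<noteq> 0)"
  then have vanish: "abs_trace (x ^ r + a * x) = 0" for x
    by blast
  have p: "1 < ?p"
    using prime_CHAR_finite_field prime_gt_1_nat by blast
  define e where "e j = (r * ?p ^ j - 1) mod ?N + 1" for j
  have e_less: "e j < CARD('a)" for j
  proof -
    have "(r * ?p ^ j - 1) mod ?N < ?N"
      using card_finite_field_ge_2[where 'a='a] by simp
    then show ?thesis
      unfolding e_def by linarith
  qed
  have e_ne_1: "e j \<noteq> 1" if "j < ?n" for j
  proof
    assume "e j = 1"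
    then have "?N dvd r * ?p ^ j - 1"
      by (simp add: e_def mod_eq_0_iff_dvd)
    moreover have "1 \<le> r * ?p ^ j"
      using r p by (simp add: Suc_le_eq)
    ultimately have "[r * ?p ^ j = 1] (mod ?N)"
      by (simp add: cong_altdef_nat)
    then show False
      using CHAR_power_conjugate_not_cong_1[OF nondeg] that by simp
  qed
  define Q where "Q = (\<Sum>j<?n. monom 1 (e j) + monom (a ^ ?p ^ j) (?p ^ j))"
  have "Q = 0"
  proof (rule poly_eq_0_if_vanishes_on_finite_field)
    have "?p ^ j < CARD('a)" if "j < ?n" for j
      using that card_eq_CHAR_power_field_degree[where 'a='a] p by (simp add: power_strict_increasing)
    then show "degree Q < CARD('a)"
      unfolding Q_def using e_less
      by (intro degree_sum_less degree_add_less) (auto intro!: le_less_trans[OF degree_monom_le])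
    show "poly Q x = 0" for x
      using vanish[of x] unfolding abs_trace_power_plus_linear[OF r] Q_def e_def
      by (simp add: poly_sum poly_monom)
  qed
  moreover have "coeff Q 1 = a"
  proof -
    have "coeff Q 1 = (\<Sum>j<?n. if j = 0 then a else 0)"
      unfolding Q_def coeff_sum using e_ne_1 p by (intro sum.cong) (auto simp: coeff_monom)
    then show ?thesis
      using field_degree_pos[where 'a='a] by simp
  qed
  ultimately show False
    using a by simp
qed

lemma nondegenerate_residue:
  fixes d :: int
  assumes "gcd d (int CARD('a::{field,finite}) - 1) = 1" "\<not> degenerate TYPE('a) d"
  defines "r \<equiv> nat (d mod (int CARD('a) - 1))"
  shows "0 < r" and "\<And>j. \<not> [r = CHAR('a) ^ j] (mod CARD('a) - 1)"
proof -
  let ?N = "int CARD('a) - 1"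
  have N: "0 < ?N"
    using card_finite_field_ge_2[where 'a='a] by simp
  have r_mod: "int r = d mod ?N"
    using pos_mod_sign[OF N, of d] by (simp add: r_def)
  show "0 < r"
  proof (rule ccontr)
    assume "\<not> 0 < r"
    then have "?N dvd d"
      using r_mod by (simp add: dvd_eq_mod_eq_0)
    then have "?N = 1"
      using assms(1) N by (simp add: gcd_proj2_iff)
    then show False
      using assms(2) unfolding degenerate_def by auto
  qed
  show "\<not> [r = CHAR('a) ^ j] (mod CARD('a) - 1)" for j
  proof
    assume "[r = CHAR('a) ^ j] (mod CARD('a) - 1)"
    moreover have "r < CARD('a) - 1"
      using r_mod pos_mod_bound[OF N, of d] by linarith
    ultimately have "r = CHAR('a) ^ j mod (CARD('a) - 1)"
      by (simp add: cong_def)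
    then have "d mod ?N = int CHAR('a) ^ j mod ?N"
      using card_finite_field_ge_2[where 'a='a] by (simp flip: r_mod add: zmod_int of_nat_diff)
    then show False
      using assms(2) unfolding degenerate_def by blast
  qed
qed

theorem corollary2p2:
  fixes d :: int and a :: "'a::{field,finite}"
  assumes "gcd d (int CARD('a) - 1) = 1"
    and "\<not> degenerate TYPE('a) d"
    and "a \<noteq> 0"
  shows "norm (weil_sum d a) < real CARD('a)"
proof -
  define r where "r = nat (d mod (int CARD('a) - 1))"
  note r = nondegenerate_residue[OF assms(1,2), folded r_def]
  have powi: "x powi d = x ^ r" for x :: 'a
    using r(1) unfolding r_def by (intro power_int_eq_power_mod) simp
  obtain x where x: "abs_trace (x ^ r + a * x) \<noteq> 0"
    using abs_trace_power_plus_linear_nonzero[OF assms(3) r] by blast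
  have "canon_add_char (0 ^ r + a * 0) = 1"
    using r(1) by (simp add: canon_add_char_eq_1_iff power_0_left)
  moreover have "canon_add_char (x ^ r + a * x) \<noteq> 1"
    using x by (simp add: canon_add_char_eq_1_iff)
  ultimately have "norm (\<Sum>y\<in>UNIV. canon_add_char (y ^ r + a * y)) < card (UNIV :: 'a set)"
    by (intro norm_sum_less_card[of _ _ 0 x]) auto
  then show ?thesis
    unfolding weil_sum_def powi by simp
qed

end
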